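(* The category of exact $\mathfrak{K}$-modules $M$ with $\alpha_{12}=0$ and $\alpha_{21}=0$ is equivalent to the category of $\mathbb{Z}/2$-graded cohomologically trivial $\mathfrak{S}$-modules, via $M\mapsto(M_0,t_0)$. A homomorphism $f_0\colon M_0\to L_0$ between two $\mathbb{Z}/2$-graded cohomologically trivial $\mathfrak{S}$-modules induces an injective or surjective homomorphism of exact $\mathfrak{K}$-modules if and only if $f_0$ is injective or surjective, respectively.
   Context: Fix a prime $p$, $N(x)=1+x+\dots+x^{p-1}$, $\mathfrak{S}=\mathbb{Z}[t]/(t^p-1)$. A $\mathfrak{K}$-module $M$ amounts to $\mathbb{Z}/2$-graded abelian groups $M_0,M_1,M_2$ with homomorphisms $\alpha_{jk}\colon M_k\to M_j$ ($j\neq k$; $\alpha_{12},\alpha_{21}$ grading-reversing, others grading-preserving) with $\alpha_{jk}\alpha_{km}=0$ for $\{j,k,m\}=\{0,1,2\}$ and, for $t_0:=1-\alpha_{02}\alpha_{20}$ on $M_0$, $s_1:=1-\alpha_{12}\alpha_{21}$ on $M_1$, $t_2:=1-\alpha_{20}\alpha_{02}$, $s_2:=1-\alpha_{21}\alpha_{12}$ on $M_2$: $\alpha_{01}\alpha_{10}=N(t_0)$, $\alpha_{10}\alpha_{01}=N(s_1)$, $N(t_2)+N(s_2)=p$; morphisms are triples of grading-preserving maps commuting with all $\alpha_{jk}$. $M$ is exact if the cyclic sequences $M_0\xrightarrow{\alpha_{10}}M_1\xrightarrow{\alpha_{21}}M_2\xrightarrow{\alpha_{02}}M_0$ and $M_0\xrightarrow{\alpha_{20}}M_2\xrightarrow{\alpha_{12}}M_1\xrightarrow{\alpha_{01}}M_0$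 are exact. An $\mathfrak{S}$-module is cohomologically trivial if $\ker(1-t)=\operatorname{im}N(t)$ and $\operatorname{im}(1-t)=\ker N(t)$. *)

theory Defs
  imports "HOL-Computational_Algebra.Primes"
begin

text \<open>Vertices 0,1,2 of the quiver; degrees of the Z/2-grading are encoded as bool
  (False = even degree 0, True = odd degree 1).  A Z/2-graded abelian group is given by
  two subgroups (one per degree) of an ambient abelian group type; graded maps are
  given degreewise.\<close>

datatype vtx = V0 | V1 | V2

definition subgrp :: "'a::ab_group_add set \<Rightarrow> bool" where
  "subgrp A \<longleftrightarrow> 0 \<in> A \<and> (\<forall>x\<in>A. \<forall>y\<in>A. x + y \<in> A) \<and> (\<forall>x\<in>A. - x \<in> A)"

definition addhom :: "'a::ab_group_add set \<Rightarrow> 'b::ab_group_add set \<Rightarrow> ('a \<Rightarrow> 'b) \<Rightarrow> bool" where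
  "addhom A B f \<longleftrightarrow> (\<forall>x\<in>A. f x \<in> B) \<and> (\<forall>x\<in>A. \<forall>y\<in>A. f (x + y) = f x + f y)"

definition Nop :: "nat \<Rightarrow> ('a::ab_group_add \<Rightarrow> 'a) \<Rightarrow> 'a \<Rightarrow> 'a" where
  "Nop p f x = (\<Sum>i<p. (f ^^ i) x)"

definition pmul :: "nat \<Rightarrow> 'a::ab_group_add \<Rightarrow> 'a" where
  "pmul p x = (\<Sum>i<p. x)"

fun reversing :: "vtx \<Rightarrow> vtx \<Rightarrow> bool" where
  "reversing V1 V2 = True"
| "reversing V2 V1 = True"
| "reversing _ _ = False"

definition tdeg :: "vtx \<Rightarrow> vtx \<Rightarrow> bool \<Rightarrow> bool" where
  "tdeg j k d = (if reversing j k then \<not> d else d)"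

text \<open>A (candidate) K-module: carriers C k d (vertex k, degree d) and maps
  alpha j k d : C k d -> C j (tdeg j k d).\<close>
type_synonym 'a kcar = "vtx \<Rightarrow> bool \<Rightarrow> 'a set"
type_synonym 'a kmaps = "vtx \<Rightarrow> vtx \<Rightarrow> bool \<Rightarrow> 'a \<Rightarrow> 'a"

definition acomp :: "'a kmaps \<Rightarrow> vtx \<Rightarrow> vtx \<Rightarrow> vtx \<Rightarrow> bool \<Rightarrow> 'a \<Rightarrow> 'a" where
  "acomp \<alpha> j k m d x = \<alpha> j k (tdeg k m d) (\<alpha> k m d x)"

definition t0 :: "'a::ab_group_add kmaps \<Rightarrow> bool \<Rightarrow> 'a \<Rightarrow> 'a" where
  "t0 \<alpha> d x = x - acomp \<alpha> V0 V2 V0 d x"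
definition s1 :: "'a::ab_group_add kmaps \<Rightarrow> bool \<Rightarrow> 'a \<Rightarrow> 'a" where
  "s1 \<alpha> d x = x - acomp \<alpha> V1 V2 V1 d x"
definition t2 :: "'a::ab_group_add kmaps \<Rightarrow> bool \<Rightarrow> 'a \<Rightarrow> 'a" where
  "t2 \<alpha> d x = x - acomp \<alpha> V2 V0 V2 d x"
definition s2 :: "'a::ab_group_add kmaps \<Rightarrow> bool \<Rightarrow> 'a \<Rightarrow> 'a" where
  "s2 \<alpha> d x = x - acomp \<alpha> V2 V1 V2 d x"

definition Kmod :: "nat \<Rightarrow> 'a::ab_group_add kcar \<Rightarrow> 'a kmaps \<Rightarrow> bool" where
  "Kmod p C \<alpha> \<longleftrightarrow>
     (\<forall>k d. subgrp (C k d)) \<and>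
     (\<forall>j k d. j \<noteq> k \<longrightarrow> addhom (C k d) (C j (tdeg j k d)) (\<alpha> j k d)) \<and>
     (\<forall>j k m d. j \<noteq> k \<and> k \<noteq> m \<and> j \<noteq> m \<longrightarrow> (\<forall>x\<in>C m d. acomp \<alpha> j k m d x = 0)) \<and>
     (\<forall>d. \<forall>x\<in>C V0 d. acomp \<alpha> V0 V1 V0 d x = Nop p (t0 \<alpha> d) x) \<and>
     (\<forall>d. \<forall>x\<in>C V1 d. acomp \<alpha> V1 V0 V1 d x = Nop p (s1 \<alpha> d) x) \<and>
     (\<forall>d. \<forall>x\<in>C V2 d. Nop p (t2 \<alpha> d) x + Nop p (s2 \<alpha> d) x = pmul p x)"

definition Kmor :: "'a::ab_group_add kcar \<Rightarrow> 'a kmaps \<Rightarrow> 'b::ab_group_add kcar \<Rightarrow> 'b kmaps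
                    \<Rightarrow> (vtx \<Rightarrow> bool \<Rightarrow> 'a \<Rightarrow> 'b) \<Rightarrow> bool" where
  "Kmor C \<alpha> D \<beta> f \<longleftrightarrow>
     (\<forall>k d. addhom (C k d) (D k d) (f k d)) \<and>
     (\<forall>j k d. j \<noteq> k \<longrightarrow> (\<forall>x\<in>C k d. f j (tdeg j k d) (\<alpha> j k d x) = \<beta> j k d (f k d x)))"

definition exact_at :: "'a::ab_group_add kcar \<Rightarrow> 'a kmaps \<Rightarrow> vtx \<Rightarrow> vtx \<Rightarrow> vtx \<Rightarrow> bool" where
  "exact_at C \<alpha> j k m \<longleftrightarrow>
     (\<forall>d. {x \<in> C k d. \<alpha> m k d x = 0} = \<alpha> k j (tdeg k j d) ` C j (tdeg k j d))"

definition Kexact :: "'a::ab_group_add kcar \<Rightarrow> 'a kmaps \<Rightarrow> bool" where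
  "Kexact C \<alpha> \<longleftrightarrow>
     exact_at C \<alpha> V0 V1 V2 \<and> exact_at C \<alpha> V1 V2 V0 \<and> exact_at C \<alpha> V2 V0 V1 \<and>
     exact_at C \<alpha> V0 V2 V1 \<and> exact_at C \<alpha> V2 V1 V0 \<and> exact_at C \<alpha> V1 V0 V2"

definition Ksub :: "nat \<Rightarrow> 'a::ab_group_add kcar \<Rightarrow> 'a kmaps \<Rightarrow> bool" where
  "Ksub p C \<alpha> \<longleftrightarrow> Kmod p C \<alpha> \<and> Kexact C \<alpha> \<and>
     (\<forall>d. \<forall>x\<in>C V2 d. \<alpha> V1 V2 d x = 0) \<and> (\<forall>d. \<forall>x\<in>C V1 d. \<alpha> V2 V1 d x = 0)"

definition Smod :: "nat \<Rightarrow> (bool \<Rightarrow> 'a::ab_group_add set) \<Rightarrow> (bool \<Rightarrow> 'a \<Rightarrow> 'a) \<Rightarrow> bool" where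
  "Smod p X t \<longleftrightarrow> (\<forall>d. subgrp (X d)) \<and> (\<forall>d. addhom (X d) (X d) (t d)) \<and>
     (\<forall>d. \<forall>x\<in>X d. (t d ^^ p) x = x)"

definition coh_trivial :: "nat \<Rightarrow> (bool \<Rightarrow> 'a::ab_group_add set) \<Rightarrow> (bool \<Rightarrow> 'a \<Rightarrow> 'a) \<Rightarrow> bool" where
  "coh_trivial p X t \<longleftrightarrow> (\<forall>d.
     {x \<in> X d. x - t d x = 0} = Nop p (t d) ` X d \<and>
     (\<lambda>x. x - t d x) ` X d = {x \<in> X d. Nop p (t d) x = 0})"

definition Smor :: "(bool \<Rightarrow> 'a::ab_group_add set) \<Rightarrow> (bool \<Rightarrow> 'a \<Rightarrow> 'a)
                    \<Rightarrow> (bool \<Rightarrow> 'b::ab_group_add set) \<Rightarrow> (bool \<Rightarrow> 'b \<Rightarrow> 'b) \<Rightarrow> (bool \<Rightarrow> 'a \<Rightarrow> 'b) \<Rightarrow> bool" where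
  "Smor X t Y u g \<longleftrightarrow> (\<forall>d. addhom (X d) (Y d) (g d) \<and> (\<forall>x\<in>X d. g d (t d x) = u d (g d x)))"

end

theory Submission
  imports Defs
begin

text \<open>Let M be exact with \<alpha>12 = \<alpha>21 = 0. Exactness at M1 and M2 makes \<alpha>10, \<alpha>20 surjective and
  \<alpha>01, \<alpha>02 injective, so M1 and M2 are recovered from M0: the endomorphisms
  \<alpha>01 \<alpha>10 = N(t0) and \<alpha>02 \<alpha>20 = 1 - t0 of M0 have the kernels of \<alpha>10, \<alpha>20 and the images of
  \<alpha>01, \<alpha>02, and exactness at M0 (ker \<alpha>10 = im \<alpha>02, ker \<alpha>20 = im \<alpha>01) says precisely that
  (M0, t0) is cohomologically trivial. Conversely a cohomologically trivial M0 is realised by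
  M1 = ker(1 - t) = im N and M2 = ker N = im(1 - t), with \<alpha>10 = N, \<alpha>20 = 1 - t and \<alpha>01, \<alpha>02
  the inclusions. A morphism is determined by f0 because the \<alpha>k0 are surjective; conversely an
  S-module map g commutes with N(t0) and 1 - t0, hence sends ker \<alpha>k0 = im \<alpha>0m \<alpha>m0 into
  ker \<beta>k0, so \<beta>k0 g factors through \<alpha>k0. Injectivity and surjectivity pass from f0 to fk along
  the injective \<alpha>0k and the surjective \<alpha>k0.\<close>

section \<open>Additive maps between subgroups\<close>

lemma subgrp_0: "subgrp A \<Longrightarrow> 0 \<in> A"
  unfolding subgrp_def by blast

lemma subgrp_add: "subgrp A \<Longrightarrow> x \<in> A \<Longrightarrow> y \<in> A \<Longrightarrow> x + y \<in> A"
  unfolding subgrp_def by blast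

lemma subgrp_diff: "subgrp A \<Longrightarrow> x \<in> A \<Longrightarrow> y \<in> A \<Longrightarrow> x - y \<in> A"
  unfolding subgrp_def by (metis diff_conv_add_uminus)

lemma addhom_in: "addhom A B f \<Longrightarrow> x \<in> A \<Longrightarrow> f x \<in> B"
  unfolding addhom_def by blast

lemma addhom_add: "addhom A B f \<Longrightarrow> x \<in> A \<Longrightarrow> y \<in> A \<Longrightarrow> f (x + y) = f x + f y"
  unfolding addhom_def by blast

lemma addhom_0: "subgrp A \<Longrightarrow> addhom A B f \<Longrightarrow> f 0 = 0"
  by (metis add_cancel_right_right addhom_add subgrp_0)

lemma addhom_diff:
  assumes "subgrp A" "addhom A B f" "x \<in> A" "y \<in> A"
  shows "f (x - y) = f x - f y"
proof -
  have "f x = f (x - y) + f y"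
    using addhom_add[OF assms(2) subgrp_diff[OF assms(1,3,4)] assms(4)] by simp
  then show ?thesis by (simp add: algebra_simps)
qed

lemma addhom_id: "addhom A A (\<lambda>x. x)"
  unfolding addhom_def by simp

lemma addhom_zero: "0 \<in> B \<Longrightarrow> addhom A B (\<lambda>x. 0)"
  unfolding addhom_def by simp

lemma addhom_comp: "addhom A B f \<Longrightarrow> addhom B C g \<Longrightarrow> addhom A C (\<lambda>x. g (f x))"
  unfolding addhom_def by simp

lemma addhom_plus:
  "subgrp B \<Longrightarrow> addhom A B f \<Longrightarrow> addhom A B g \<Longrightarrow> addhom A B (\<lambda>x. f x + g x)"
  unfolding addhom_def by (simp add: subgrp_add algebra_simps)

lemma addhom_minus:
  "subgrp B \<Longrightarrow> addhom A B f \<Longrightarrow> addhom A B g \<Longrightarrow> addhom A B (\<lambda>x. f x - g x)"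
  unfolding addhom_def by (simp add: subgrp_diff algebra_simps)

lemma inj_on_addhom:
  assumes "subgrp A" "addhom A B f" and "\<And>x. x \<in> A \<Longrightarrow> f x = 0 \<Longrightarrow> x = 0"
  shows "inj_on f A"
proof (rule inj_onI)
  fix x y assume "x \<in> A" "y \<in> A" "f x = f y"
  then have "f (x - y) = 0"
    using addhom_diff[OF assms(1,2)] by simp
  then show "x = y"
    using assms(3) subgrp_diff[OF assms(1)] \<open>x \<in> A\<close> \<open>y \<in> A\<close> by fastforce
qed

lemma subgrp_kernel:
  assumes "subgrp A" "addhom A B h"
  shows "subgrp {x \<in> A. h x = 0}"
  unfolding subgrp_def
proof (intro conjI ballI)
  show "0 \<in> {x \<in> A. h x = 0}"
    using assms addhom_0 subgrp_0 by blast
next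
  fix x y assume "x \<in> {x \<in> A. h x = 0}" "y \<in> {x \<in> A. h x = 0}"
  then show "x + y \<in> {x \<in> A. h x = 0}"
    using assms subgrp_add addhom_add by fastforce
next
  fix x assume "x \<in> {x \<in> A. h x = 0}"
  then show "- x \<in> {x \<in> A. h x = 0}"
    using assms addhom_diff[OF assms, of 0 x] addhom_0 subgrp_0 subgrp_diff[OF assms(1), of 0 x]
    by auto
qed

lemma addhom_funpow:
  assumes "addhom A A t"
  shows "addhom A A (t ^^ i)"
proof (induction i)
  case 0
  then show ?case by (simp add: addhom_def)
next
  case (Suc i)
  then show ?case using addhom_comp[OF Suc.IH assms] by (simp add: comp_def)
qed

lemma funpow_fixpoint: "t x = x \<Longrightarrow> (t ^^ i) x = x"
  by (induction i) auto

lemma funpow_natural: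
  assumes "addhom A A t" "\<And>x. x \<in> A \<Longrightarrow> g (t x) = u (g x)" "x \<in> A"
  shows "g ((t ^^ i) x) = (u ^^ i) (g x)"
  using assms addhom_funpow[OF assms(1), THEN addhom_in] by (induction i) auto

section \<open>The norm operator\<close>

lemma Nop_0 [simp]: "Nop 0 t = (\<lambda>x. 0)"
  by (simp add: Nop_def fun_eq_iff)

lemma Nop_Suc: "Nop (Suc p) t = (\<lambda>x. Nop p t x + (t ^^ p) x)"
  by (simp add: Nop_def fun_eq_iff)

lemma addhom_Nop: "subgrp A \<Longrightarrow> addhom A A t \<Longrightarrow> addhom A A (Nop p t)"
  by (induction p)
    (auto simp: Nop_Suc addhom_zero subgrp_0 intro: addhom_plus addhom_funpow)

lemma Nop_telescope:
  assumes "subgrp A" "addhom A A t" "x \<in> A"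
  shows "t (Nop p t x) = Nop p t x - x + (t ^^ p) x"
proof (induction p)
  case 0
  then show ?case using assms by (simp add: addhom_0)
next
  case (Suc p)
  have "t (Nop (Suc p) t x) = t (Nop p t x) + t ((t ^^ p) x)"
    unfolding Nop_Suc using assms
    by (intro addhom_add addhom_Nop[THEN addhom_in] addhom_funpow[THEN addhom_in])
  then show ?case using Suc by (simp add: Nop_Suc algebra_simps)
qed

lemma Nop_fixed_iff:
  "subgrp A \<Longrightarrow> addhom A A t \<Longrightarrow> x \<in> A \<Longrightarrow> t (Nop p t x) = Nop p t x \<longleftrightarrow> (t ^^ p) x = x"
  by (simp add: Nop_telescope eq_diff_eq add.commute)

lemma Nop_natural:
  assumes "subgrp A" "addhom A A t" "addhom A B g" "\<And>x. x \<in> A \<Longrightarrow> g (t x) = u (g x)" "x \<in> A"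
  shows "g (Nop p t x) = Nop p u (g x)"
proof (induction p)
  case 0
  then show ?case using assms by (simp add: addhom_0)
next
  case (Suc p)
  have "g (Nop (Suc p) t x) = g (Nop p t x) + g ((t ^^ p) x)"
    unfolding Nop_Suc using assms
    by (intro addhom_add addhom_Nop[THEN addhom_in] addhom_funpow[THEN addhom_in])
  then show ?case using Suc funpow_natural[of A t g u x p] assms by (simp add: Nop_Suc)
qed

lemma Nop_fixpoint: "t x = x \<Longrightarrow> Nop p t x = pmul p x"
  unfolding Nop_def pmul_def by (simp add: funpow_fixpoint)

lemma Nop_diff_self:
  assumes "subgrp A" "addhom A A t" "x \<in> A" "(t ^^ p) x = x"
  shows "Nop p t (x - t x) = 0"
proof -
  have "Nop p t (x - t x) = Nop p t x - Nop p t (t x)"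
    using addhom_diff[OF assms(1) addhom_Nop[OF assms(1,2)] assms(3) addhom_in[OF assms(2,3)]] .
  also have "Nop p t (t x) = t (Nop p t x)"
    using assms by (simp add: Nop_natural[OF assms(1,2,2), of t])
  moreover have "t (Nop p t x) = Nop p t x"
    using Nop_fixed_iff[OF assms(1-3)] assms(4) by blast
  ultimately show ?thesis by simp
qed

section \<open>Factoring an additive map through a surjection\<close>

definition lift_along :: "('a \<Rightarrow> 'b) \<Rightarrow> 'a set \<Rightarrow> ('a \<Rightarrow> 'c) \<Rightarrow> 'b \<Rightarrow> 'c" where
  "lift_along a A h y = h (SOME x. x \<in> A \<and> a x = y)"

context
  fixes A :: "'a::ab_group_add set" and A' :: "'b::ab_group_add set" and B :: "'c::ab_group_add set"
    and a :: "'a \<Rightarrow> 'b" and h :: "'a \<Rightarrow> 'c"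
  assumes A: "subgrp A" and a: "addhom A A' a" and h: "addhom A B h"
    and kernel: "\<And>x. x \<in> A \<Longrightarrow> a x = 0 \<Longrightarrow> h x = 0"
begin

lemma lift_along_apply: "x \<in> A \<Longrightarrow> lift_along a A h (a x) = h x"
proof -
  assume x: "x \<in> A"
  define x' where "x' = (SOME x'. x' \<in> A \<and> a x' = a x)"
  have x': "x' \<in> A" "a x' = a x"
    unfolding x'_def using someI[of "\<lambda>x'. x' \<in> A \<and> a x' = a x"] x by blast+
  have "a (x' - x) = 0"
    using addhom_diff[OF A a x'(1) x] x'(2) by simp
  then have "h (x' - x) = 0"
    using kernel subgrp_diff[OF A x'(1) x] by blast
  then show ?thesis
    unfolding lift_along_def x'_def[symmetric] using addhom_diff[OF A h x'(1) x] by simp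
qed

lemma addhom_lift_along: "addhom (a ` A) B (lift_along a A h)"
  unfolding addhom_def
proof (intro conjI ballI)
  fix y y' assume "y \<in> a ` A" "y' \<in> a ` A"
  then obtain x x' where x: "x \<in> A" "y = a x" and x': "x' \<in> A" "y' = a x'"
    by blast
  have "y + y' = a (x + x')"
    using addhom_add[OF a x(1) x'(1)] x x' by simp
  then have "lift_along a A h (y + y') = h (x + x')"
    using lift_along_apply[OF subgrp_add[OF A x(1) x'(1)]] by simp
  also have "\<dots> = lift_along a A h y + lift_along a A h y'"
    using addhom_add[OF h x(1) x'(1)] lift_along_apply x x' by simp
  finally show "lift_along a A h (y + y') = lift_along a A h y + lift_along a A h y'" .
next
  fix y assume "y \<in> a ` A"
  then obtain x where "x \<in> A" "y = a x"
    by blast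
  then show "lift_along a A h y \<in> B"
    using lift_along_apply addhom_in[OF h] by simp
qed

end

section \<open>Exact K-modules with \<alpha>12 = \<alpha>21 = 0\<close>

lemma tdeg_V0 [simp]: "tdeg V0 k d = d" "tdeg k V0 d = d"
  by (cases k; simp add: tdeg_def)+

lemma tdeg_V1_V2 [simp]: "tdeg V1 V2 d = (\<not> d)" "tdeg V2 V1 d = (\<not> d)"
  by (simp_all add: tdeg_def)

lemma other_nonzero_vertex: "k \<noteq> V0 \<Longrightarrow> \<exists>m. m \<noteq> V0 \<and> m \<noteq> k"
  by (cases k) auto

locale Ksub_module =
  fixes p :: nat and C :: "'a::ab_group_add kcar" and \<alpha> :: "'a kmaps"
  assumes Ksub: "Ksub p C \<alpha>"
begin

lemma subgrp_C: "subgrp (C k d)"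
  using Ksub unfolding Ksub_def Kmod_def by blast

lemma addhom_alpha: "j \<noteq> k \<Longrightarrow> addhom (C k d) (C j (tdeg j k d)) (\<alpha> j k d)"
  using Ksub unfolding Ksub_def Kmod_def by blast

lemma alpha_in: "j \<noteq> k \<Longrightarrow> x \<in> C k d \<Longrightarrow> \<alpha> j k d x \<in> C j (tdeg j k d)"
  using addhom_alpha addhom_in by blast

lemma alpha_alpha_zero:
  "j \<noteq> k \<Longrightarrow> k \<noteq> m \<Longrightarrow> j \<noteq> m \<Longrightarrow> x \<in> C m d \<Longrightarrow> \<alpha> j k (tdeg k m d) (\<alpha> k m d x) = 0"
  using Ksub unfolding Ksub_def Kmod_def acomp_def by blast

lemma alpha01_alpha10: "x \<in> C V0 d \<Longrightarrow> \<alpha> V0 V1 d (\<alpha> V1 V0 d x) = Nop p (t0 \<alpha> d) x"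
  using Ksub unfolding Ksub_def Kmod_def acomp_def by simp

lemma t0_eq: "t0 \<alpha> d = (\<lambda>x. x - \<alpha> V0 V2 d (\<alpha> V2 V0 d x))"
  by (simp add: fun_eq_iff t0_def acomp_def)

lemma diff_t0: "x - t0 \<alpha> d x = \<alpha> V0 V2 d (\<alpha> V2 V0 d x)"
  by (simp add: t0_eq)

lemma alpha_between_nonzero: "j \<noteq> V0 \<Longrightarrow> k \<noteq> V0 \<Longrightarrow> j \<noteq> k \<Longrightarrow> x \<in> C k d \<Longrightarrow> \<alpha> j k d x = 0"
  using Ksub unfolding Ksub_def by (cases j; cases k) auto

lemma exact_kernel_eq_image:
  "j \<noteq> k \<Longrightarrow> k \<noteq> m \<Longrightarrow> j \<noteq> m \<Longrightarrow>
    {x \<in> C k d. \<alpha> m k d x = 0} = \<alpha> k j (tdeg k j d) ` C j (tdeg k j d)"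
  using Ksub unfolding Ksub_def Kexact_def exact_at_def by (cases j; cases k; cases m) simp_all

lemma image_alpha_from_V0:
  assumes "k \<noteq> V0"
  shows "\<alpha> k V0 d ` C V0 d = C k d"
proof -
  obtain m where m: "m \<noteq> V0" "m \<noteq> k"
    using other_nonzero_vertex[OF assms] by blast
  have "C k d = {x \<in> C k d. \<alpha> m k d x = 0}"
    using alpha_between_nonzero[OF m(1) assms m(2)] by blast
  also have "\<dots> = \<alpha> k V0 d ` C V0 d"
    using exact_kernel_eq_image[of V0 k m d] assms m by simp
  finally show ?thesis ..
qed

lemma addhom_alpha_to_V0: "k \<noteq> V0 \<Longrightarrow> addhom (C k d) (C V0 d) (\<alpha> V0 k d)"
  using addhom_alpha[of V0 k d] by simp

lemma addhom_alpha_from_V0: "k \<noteq> V0 \<Longrightarrow> addhom (C V0 d) (C k d) (\<alpha> k V0 d)"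
  using addhom_alpha[of k V0 d] by simp

lemma alpha_to_V0_eq_0:
  assumes "k \<noteq> V0" "x \<in> C k d"
  shows "\<alpha> V0 k d x = 0 \<longleftrightarrow> x = 0"
proof
  obtain m where m: "m \<noteq> V0" "m \<noteq> k"
    using other_nonzero_vertex[OF assms(1)] by blast
  assume "\<alpha> V0 k d x = 0"
  then have "x \<in> \<alpha> k m (tdeg k m d) ` C m (tdeg k m d)"
    using exact_kernel_eq_image[of m k V0 d] assms m by blast
  then show "x = 0"
    using alpha_between_nonzero assms(1) m by blast
next
  show "x = 0 \<Longrightarrow> \<alpha> V0 k d x = 0"
    using addhom_0[OF subgrp_C addhom_alpha_to_V0[OF assms(1)]] by simp
qed

lemma inj_on_alpha_to_V0: "k \<noteq> V0 \<Longrightarrow> inj_on (\<alpha> V0 k d) (C k d)"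
  using inj_on_addhom[OF subgrp_C addhom_alpha_to_V0] alpha_to_V0_eq_0 by blast

lemma kernel_alpha_from_V0:
  "k \<noteq> V0 \<Longrightarrow> m \<noteq> V0 \<Longrightarrow> m \<noteq> k \<Longrightarrow> {x \<in> C V0 d. \<alpha> k V0 d x = 0} = \<alpha> V0 m d ` C m d"
  using exact_kernel_eq_image[of m V0 k d] by simp

lemma addhom_alpha_alpha: "k \<noteq> V0 \<Longrightarrow> addhom (C V0 d) (C V0 d) (\<lambda>x. \<alpha> V0 k d (\<alpha> k V0 d x))"
  using addhom_comp[OF addhom_alpha_from_V0 addhom_alpha_to_V0] by simp

lemma kernel_alpha_alpha:
  "k \<noteq> V0 \<Longrightarrow> {x \<in> C V0 d. \<alpha> V0 k d (\<alpha> k V0 d x) = 0} = {x \<in> C V0 d. \<alpha> k V0 d x = 0}"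
  using alpha_to_V0_eq_0 alpha_in[of k V0] by fastforce

lemma kernel_alpha_alpha_eq_image:
  assumes "k \<noteq> V0" "m \<noteq> V0" "m \<noteq> k"
  shows "{x \<in> C V0 d. \<alpha> V0 k d (\<alpha> k V0 d x) = 0} = (\<lambda>x. \<alpha> V0 m d (\<alpha> m V0 d x)) ` C V0 d"
  using kernel_alpha_alpha[OF assms(1)] kernel_alpha_from_V0[OF assms]
    image_alpha_from_V0[OF assms(2)] by (simp add: image_image[symmetric])

lemma addhom_t0: "addhom (C V0 d) (C V0 d) (t0 \<alpha> d)"
  unfolding t0_eq using addhom_minus[OF subgrp_C addhom_id addhom_alpha_alpha] by simp

lemma t0_Nop:
  assumes "x \<in> C V0 d"
  shows "t0 \<alpha> d (Nop p (t0 \<alpha> d) x) = Nop p (t0 \<alpha> d) x"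
proof -
  have "\<alpha> V2 V0 d (Nop p (t0 \<alpha> d) x) = 0"
    using alpha01_alpha10[OF assms] alpha_alpha_zero[of V2 V0 V1] alpha_in[OF _ assms, of V1]
    by force
  then show ?thesis
    using addhom_0[OF subgrp_C addhom_alpha_to_V0[of V2]] by (simp add: t0_def acomp_def)
qed

lemma Smod_t0: "Smod p (C V0) (t0 \<alpha>)"
  unfolding Smod_def
  using subgrp_C addhom_t0 t0_Nop Nop_fixed_iff[OF subgrp_C addhom_t0] by blast

lemma coh_trivial_t0: "coh_trivial p (C V0) (t0 \<alpha>)"
  unfolding coh_trivial_def
proof (intro allI conjI)
  fix d
  have Nop_eq: "Nop p (t0 \<alpha> d) ` C V0 d = (\<lambda>x. \<alpha> V0 V1 d (\<alpha> V1 V0 d x)) ` C V0 d"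
    using alpha01_alpha10 by simp
  show "{x \<in> C V0 d. x - t0 \<alpha> d x = 0} = Nop p (t0 \<alpha> d) ` C V0 d"
    unfolding diff_t0 Nop_eq by (rule kernel_alpha_alpha_eq_image) simp_all
  have "(\<lambda>x. x - t0 \<alpha> d x) ` C V0 d = (\<lambda>x. \<alpha> V0 V2 d (\<alpha> V2 V0 d x)) ` C V0 d"
    unfolding diff_t0 ..
  also have "\<dots> = {x \<in> C V0 d. \<alpha> V0 V1 d (\<alpha> V1 V0 d x) = 0}"
    by (rule kernel_alpha_alpha_eq_image[symmetric]) simp_all
  also have "\<dots> = {x \<in> C V0 d. Nop p (t0 \<alpha> d) x = 0}"
    using alpha01_alpha10 by auto
  finally show "(\<lambda>x. x - t0 \<alpha> d x) ` C V0 d = {x \<in> C V0 d. Nop p (t0 \<alpha> d) x = 0}" .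
qed

end

section \<open>Morphisms\<close>

lemma Kmor_addhom: "Kmor C \<alpha> D \<beta> f \<Longrightarrow> addhom (C k d) (D k d) (f k d)"
  unfolding Kmor_def by blast

lemma Kmor_commute:
  "Kmor C \<alpha> D \<beta> f \<Longrightarrow> j \<noteq> k \<Longrightarrow> x \<in> C k d \<Longrightarrow> f j (tdeg j k d) (\<alpha> j k d x) = \<beta> j k d (f k d x)"
  unfolding Kmor_def by blast

lemma Smor_addhom: "Smor X t Y u g \<Longrightarrow> addhom (X d) (Y d) (g d)"
  unfolding Smor_def by blast

lemma Smor_commute: "Smor X t Y u g \<Longrightarrow> x \<in> X d \<Longrightarrow> g d (t d x) = u d (g d x)"
  unfolding Smor_def by blast

locale Ksub_pair = M: Ksub_module p C \<alpha> + L: Ksub_module p D \<beta>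
  for p :: nat and C :: "'a::ab_group_add kcar" and \<alpha> and D :: "'b::ab_group_add kcar" and \<beta>
begin

lemma Kmor_commute_alpha_alpha:
  assumes "Kmor C \<alpha> D \<beta> f" "k \<noteq> V0" "x \<in> C V0 d"
  shows "f V0 d (\<alpha> V0 k d (\<alpha> k V0 d x)) = \<beta> V0 k d (\<beta> k V0 d (f V0 d x))"
  using Kmor_commute[OF assms(1), of k V0] Kmor_commute[OF assms(1), of V0 k]
    M.alpha_in[of k V0] assms(2,3) by simp

lemma Smor_Kmor:
  assumes f: "Kmor C \<alpha> D \<beta> f"
  shows "Smor (C V0) (t0 \<alpha>) (D V0) (t0 \<beta>) (f V0)"
proof -
  have "f V0 d (t0 \<alpha> d x) = t0 \<beta> d (f V0 d x)" if x: "x \<in> C V0 d" for d x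
  proof -
    have "f V0 d (t0 \<alpha> d x) = f V0 d x - f V0 d (\<alpha> V0 V2 d (\<alpha> V2 V0 d x))"
      unfolding M.t0_eq
      using addhom_diff[OF M.subgrp_C Kmor_addhom[OF f] x M.addhom_alpha_alpha[THEN addhom_in]] x
      by simp
    then show ?thesis
      using Kmor_commute_alpha_alpha[OF f _ x, of V2] by (simp add: L.t0_eq)
  qed
  then show ?thesis
    unfolding Smor_def using Kmor_addhom[OF f] by blast
qed

lemma Kmor_eqI:
  assumes f: "Kmor C \<alpha> D \<beta> f" and f': "Kmor C \<alpha> D \<beta> f'"
    and eq0: "\<And>d x. x \<in> C V0 d \<Longrightarrow> f V0 d x = f' V0 d x" and x: "x \<in> C k d"
  shows "f k d x = f' k d x"
proof (cases "k = V0")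
  case False
  then obtain w where "w \<in> C V0 d" "x = \<alpha> k V0 d w"
    using M.image_alpha_from_V0 x by blast
  then show ?thesis
    using Kmor_commute[OF f, of k V0] Kmor_commute[OF f', of k V0] eq0 False by simp
qed (use eq0 x in simp)

lemma Kmor_inj_on_iff:
  assumes f: "Kmor C \<alpha> D \<beta> f"
  shows "(\<forall>k d. inj_on (f k d) (C k d)) \<longleftrightarrow> (\<forall>d. inj_on (f V0 d) (C V0 d))"
proof (intro iffI allI)
  fix k d assume inj0: "\<forall>d. inj_on (f V0 d) (C V0 d)"
  show "inj_on (f k d) (C k d)"
  proof (cases "k = V0")
    case False
    have "\<alpha> V0 k d ` C k d \<subseteq> C V0 d"
      using M.alpha_in[of V0 k] False by auto
    then have "inj_on (f V0 d \<circ> \<alpha> V0 k d) (C k d)"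
      using comp_inj_on[OF M.inj_on_alpha_to_V0[OF False] inj_on_subset[OF inj0[rule_format]]]
      by blast
    also have "inj_on (f V0 d \<circ> \<alpha> V0 k d) (C k d) \<longleftrightarrow> inj_on (\<beta> V0 k d \<circ> f k d) (C k d)"
      using Kmor_commute[OF f, of V0 k] False by (intro inj_on_cong) simp
    finally show ?thesis
      by (rule inj_on_imageI2)
  qed (use inj0 in simp)
qed simp

lemma Kmor_surj_iff:
  assumes f: "Kmor C \<alpha> D \<beta> f"
  shows "(\<forall>k d. f k d ` C k d = D k d) \<longleftrightarrow> (\<forall>d. f V0 d ` C V0 d = D V0 d)"
proof (intro iffI allI)
  fix k d assume surj0: "\<forall>d. f V0 d ` C V0 d = D V0 d"
  show "f k d ` C k d = D k d"
  proof (cases "k = V0")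
    case False
    have "D k d = \<beta> k V0 d ` f V0 d ` C V0 d"
      using L.image_alpha_from_V0[OF False] surj0 by simp
    also have "\<dots> = f k d ` \<alpha> k V0 d ` C V0 d"
      unfolding image_image using Kmor_commute[OF f, of k V0] False by simp
    also have "\<dots> = f k d ` C k d"
      using M.image_alpha_from_V0[OF False] by simp
    finally show ?thesis ..
  qed (use surj0 in simp)
qed simp

context
  fixes g :: "bool \<Rightarrow> 'a \<Rightarrow> 'b"
  assumes g: "Smor (C V0) (t0 \<alpha>) (D V0) (t0 \<beta>) g"
begin

lemma Smor_commute_alpha_alpha:
  assumes "k \<noteq> V0" "x \<in> C V0 d"
  shows "g d (\<alpha> V0 k d (\<alpha> k V0 d x)) = \<beta> V0 k d (\<beta> k V0 d (g d x))"
proof (cases k)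
  case V1
  have "g d (Nop p (t0 \<alpha> d) x) = Nop p (t0 \<beta> d) (g d x)"
    by (rule Nop_natural[OF M.subgrp_C M.addhom_t0 Smor_addhom[OF g], where u = "t0 \<beta> d"])
      (simp_all add: Smor_commute[OF g] assms(2))
  then show ?thesis
    using V1 assms(2) M.alpha01_alpha10 L.alpha01_alpha10 addhom_in[OF Smor_addhom[OF g]] by simp
next
  case V2
  have "g d (x - t0 \<alpha> d x) = g d x - t0 \<beta> d (g d x)"
    using addhom_diff[OF M.subgrp_C Smor_addhom[OF g] assms(2) addhom_in[OF M.addhom_t0 assms(2)]]
      Smor_commute[OF g assms(2)] by simp
  then show ?thesis
    using V2 by (simp add: M.diff_t0 L.diff_t0)
qed (use assms in simp)

lemma Smor_kernel_alpha_from_V0: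
  assumes k: "k \<noteq> V0" and x: "x \<in> C V0 d" "\<alpha> k V0 d x = 0"
  shows "\<beta> k V0 d (g d x) = 0"
proof -
  obtain m where m: "m \<noteq> V0" "m \<noteq> k"
    using other_nonzero_vertex[OF k] by blast
  have "x \<in> \<alpha> V0 m d ` C m d"
    using M.kernel_alpha_from_V0[OF k m] x by blast
  then obtain v where v: "v \<in> C V0 d" "x = \<alpha> V0 m d (\<alpha> m V0 d v)"
    unfolding M.image_alpha_from_V0[OF m(1), symmetric] by blast
  have "\<beta> m V0 d (g d v) \<in> D m d"
    using addhom_in[OF L.addhom_alpha_from_V0[OF m(1)] addhom_in[OF Smor_addhom[OF g] v(1)]] .
  moreover have "g d x = \<beta> V0 m d (\<beta> m V0 d (g d v))"
    using v Smor_commute_alpha_alpha[OF m(1) v(1)] by simp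
  ultimately show ?thesis
    using L.alpha_alpha_zero[of k V0 m] k m by simp
qed

definition Kmor_extension :: "vtx \<Rightarrow> bool \<Rightarrow> 'a \<Rightarrow> 'b" where
  "Kmor_extension k d =
    (if k = V0 then g d else lift_along (\<alpha> k V0 d) (C V0 d) (\<lambda>x. \<beta> k V0 d (g d x)))"

lemma addhom_beta_g: "k \<noteq> V0 \<Longrightarrow> addhom (C V0 d) (D k d) (\<lambda>x. \<beta> k V0 d (g d x))"
  using addhom_comp[OF Smor_addhom[OF g] L.addhom_alpha_from_V0] by simp

lemma Kmor_extension_V0: "Kmor_extension V0 d = g d"
  by (simp add: Kmor_extension_def)

lemma Kmor_extension_alpha:
  assumes "k \<noteq> V0" "x \<in> C V0 d"
  shows "Kmor_extension k d (\<alpha> k V0 d x) = \<beta> k V0 d (g d x)"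
  using lift_along_apply[OF M.subgrp_C M.addhom_alpha_from_V0 addhom_beta_g, OF assms(1,1)]
    Smor_kernel_alpha_from_V0[OF assms(1)] assms by (simp add: Kmor_extension_def)

lemma addhom_Kmor_extension: "addhom (C k d) (D k d) (Kmor_extension k d)"
proof (cases "k = V0")
  case False
  then show ?thesis
    using addhom_lift_along[OF M.subgrp_C M.addhom_alpha_from_V0 addhom_beta_g, OF False False]
      Smor_kernel_alpha_from_V0[OF False] M.image_alpha_from_V0[OF False]
    by (simp add: Kmor_extension_def)
qed (simp add: Kmor_extension_def Smor_addhom[OF g])

lemma Kmor_Kmor_extension: "Kmor C \<alpha> D \<beta> Kmor_extension"
  unfolding Kmor_def
proof (intro conjI allI impI ballI addhom_Kmor_extension)
  fix j k d x assume jk: "j \<noteq> k" and x: "x \<in> C k d"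
  consider "k = V0" | "j = V0" | "j \<noteq> V0" "k \<noteq> V0"
    by blast
  then show "Kmor_extension j (tdeg j k d) (\<alpha> j k d x) = \<beta> j k d (Kmor_extension k d x)"
  proof cases
    case 1
    then show ?thesis
      using jk x Kmor_extension_alpha by (simp add: Kmor_extension_V0)
  next
    case 2
    with jk have k: "k \<noteq> V0"
      by simp
    then obtain w where w: "w \<in> C V0 d" "x = \<alpha> k V0 d w"
      using x M.image_alpha_from_V0[of k d] by blast
    then show ?thesis
      using 2 k Smor_commute_alpha_alpha Kmor_extension_alpha by (simp add: Kmor_extension_V0)
  next
    case 3
    have "Kmor_extension k d x \<in> D k d"
      using addhom_in[OF addhom_Kmor_extension x] .
    then show ?thesis
      using 3 jk x M.alpha_between_nonzero L.alpha_between_nonzero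
        addhom_0[OF M.subgrp_C addhom_Kmor_extension] by simp
  qed
qed

end

lemma Smor_extends_to_Kmor:
  "Smor (C V0) (t0 \<alpha>) (D V0) (t0 \<beta>) g \<Longrightarrow>
    \<exists>f. Kmor C \<alpha> D \<beta> f \<and> (\<forall>d. \<forall>x\<in>C V0 d. f V0 d x = g d x)"
  by (intro exI[of _ "Kmor_extension g"] conjI Kmor_Kmor_extension) (simp_all add: Kmor_extension_V0)

end

section \<open>Realising cohomologically trivial S-modules\<close>

locale coh_trivial_Smod =
  fixes p :: nat and X :: "bool \<Rightarrow> 'a::ab_group_add set" and t :: "bool \<Rightarrow> 'a \<Rightarrow> 'a"
  assumes Smod: "Smod p X t" and coh_trivial: "coh_trivial p X t"
begin

lemma subgrp_X: "subgrp (X d)"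
  and addhom_t: "addhom (X d) (X d) (t d)"
  and funpow_t: "x \<in> X d \<Longrightarrow> (t d ^^ p) x = x"
  using Smod unfolding Smod_def by auto

lemma kernel_diff_t: "{x \<in> X d. x - t d x = 0} = Nop p (t d) ` X d"
  and image_diff_t: "(\<lambda>x. x - t d x) ` X d = {x \<in> X d. Nop p (t d) x = 0}"
  using coh_trivial unfolding coh_trivial_def by auto

lemma addhom_diff_t: "addhom (X d) (X d) (\<lambda>x. x - t d x)"
  using addhom_minus[OF subgrp_X addhom_id addhom_t] .

lemma addhom_Nop_t: "addhom (X d) (X d) (Nop p (t d))"
  using addhom_Nop[OF subgrp_X addhom_t] .

definition Kcar :: "'a kcar" where
  "Kcar k d = (case k of
      V0 \<Rightarrow> X d
    | V1 \<Rightarrow> {x \<in> X d. x - t d x = 0}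
    | V2 \<Rightarrow> {x \<in> X d. Nop p (t d) x = 0})"

definition Kalpha :: "'a kmaps" where
  "Kalpha j k d x = (case (j, k) of
      (V0, _) \<Rightarrow> x
    | (V1, V0) \<Rightarrow> Nop p (t d) x
    | (V2, V0) \<Rightarrow> x - t d x
    | _ \<Rightarrow> 0)"

lemma Kcar_simps [simp]:
  "Kcar V0 d = X d" "Kcar V1 d = {x \<in> X d. x - t d x = 0}" "Kcar V2 d = {x \<in> X d. Nop p (t d) x = 0}"
  by (simp_all add: Kcar_def)

lemma Kalpha_simps [simp]:
  "Kalpha V0 k d = (\<lambda>x. x)" "Kalpha V1 V0 d = Nop p (t d)" "Kalpha V2 V0 d = (\<lambda>x. x - t d x)"
  "Kalpha V1 V2 d = (\<lambda>x. 0)" "Kalpha V2 V1 d = (\<lambda>x. 0)"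
  by (simp_all add: fun_eq_iff Kalpha_def split: vtx.split)

lemma t0_Kalpha: "t0 Kalpha d = t d"
  and s1_Kalpha: "s1 Kalpha d = (\<lambda>x. x)"
  and t2_Kalpha: "t2 Kalpha d = t d"
  and s2_Kalpha: "s2 Kalpha d = (\<lambda>x. x)"
  by (simp_all add: fun_eq_iff t0_def s1_def t2_def s2_def acomp_def)

lemma subgrp_Kcar: "subgrp (Kcar k d)"
  using subgrp_X subgrp_kernel[OF subgrp_X addhom_diff_t] subgrp_kernel[OF subgrp_X addhom_Nop_t]
  by (cases k) simp_all

lemma zero_in_Kcar: "0 \<in> Kcar k d"
  using subgrp_0[OF subgrp_Kcar] .

lemma Kmod_Kcar: "Kmod p Kcar Kalpha"
  unfolding Kmod_def
proof (intro conjI allI impI ballI subgrp_Kcar)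
  fix j k :: vtx and d :: bool assume "j \<noteq> k"
  have "addhom (Kcar V0 d) (Kcar V1 d) (Kalpha V1 V0 d)"
    using addhom_Nop_t Nop_telescope[OF subgrp_X addhom_t] funpow_t
    unfolding addhom_def by simp
  moreover have "addhom (Kcar V0 d) (Kcar V2 d) (Kalpha V2 V0 d)"
    using addhom_diff_t Nop_diff_self[OF subgrp_X addhom_t _ funpow_t]
    unfolding addhom_def by simp
  moreover have "addhom (Kcar k d) (Kcar V0 d) (Kalpha V0 k d)"
    by (cases k) (auto simp: addhom_def)
  moreover have "addhom (Kcar k d) (Kcar j (\<not> d)) (\<lambda>x. 0)"
    using addhom_zero[OF zero_in_Kcar] .
  ultimately show "addhom (Kcar k d) (Kcar j (tdeg j k d)) (Kalpha j k d)"
    using \<open>j \<noteq> k\<close> by (cases j; cases k) simp_all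
next
  fix j k m :: vtx and d :: bool and x
  assume "j \<noteq> k \<and> k \<noteq> m \<and> j \<noteq> m" and "x \<in> Kcar m d"
  then show "acomp Kalpha j k m d x = 0"
    by (cases j; cases k; cases m) (simp_all add: acomp_def)
next
  fix d :: bool and x
  show "acomp Kalpha V0 V1 V0 d x = Nop p (t0 Kalpha d) x"
    by (simp add: acomp_def t0_Kalpha)
  assume "x \<in> Kcar V1 d"
  then show "acomp Kalpha V1 V0 V1 d x = Nop p (s1 Kalpha d) x"
    by (simp add: acomp_def s1_Kalpha Nop_fixpoint)
next
  fix d :: bool and x assume "x \<in> Kcar V2 d"
  then show "Nop p (t2 Kalpha d) x + Nop p (s2 Kalpha d) x = pmul p x"
    by (simp add: t2_Kalpha s2_Kalpha Nop_fixpoint)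
qed

lemma Kexact_Kcar: "Kexact Kcar Kalpha"
  unfolding Kexact_def exact_at_def
proof (intro conjI allI)
  fix d
  have zero_image: "{x \<in> Kcar k d. x = 0} = (\<lambda>x. 0) ` Kcar m (\<not> d)" for k m
    using zero_in_Kcar[of k d] zero_in_Kcar[of m "\<not> d"] by (auto simp del: Kcar_simps)
  show "{x \<in> Kcar V1 d. Kalpha V2 V1 d x = 0} = Kalpha V1 V0 (tdeg V1 V0 d) ` Kcar V0 (tdeg V1 V0 d)"
    using kernel_diff_t by simp
  show "{x \<in> Kcar V2 d. Kalpha V0 V2 d x = 0} = Kalpha V2 V1 (tdeg V2 V1 d) ` Kcar V1 (tdeg V2 V1 d)"
    using zero_image by (simp del: Kcar_simps)
  show "{x \<in> Kcar V0 d. Kalpha V1 V0 d x = 0} = Kalpha V0 V2 (tdeg V0 V2 d) ` Kcar V2 (tdeg V0 V2 d)"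
    by simp
  show "{x \<in> Kcar V2 d. Kalpha V1 V2 d x = 0} = Kalpha V2 V0 (tdeg V2 V0 d) ` Kcar V0 (tdeg V2 V0 d)"
    using image_diff_t by simp
  show "{x \<in> Kcar V1 d. Kalpha V0 V1 d x = 0} = Kalpha V1 V2 (tdeg V1 V2 d) ` Kcar V2 (tdeg V1 V2 d)"
    using zero_image by (simp del: Kcar_simps)
  show "{x \<in> Kcar V0 d. Kalpha V2 V0 d x = 0} = Kalpha V0 V1 (tdeg V0 V1 d) ` Kcar V1 (tdeg V0 V1 d)"
    by simp
qed

lemma Ksub_Kcar: "Ksub p Kcar Kalpha"
  unfolding Ksub_def using Kmod_Kcar Kexact_Kcar by simp

lemma ex_Ksub_realising:
  "\<exists>(C :: 'a kcar) \<alpha> g. Ksub p C \<alpha> \<and> Smor (C V0) (t0 \<alpha>) X t g \<and> (\<forall>d. bij_betw (g d) (C V0 d) (X d))"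
proof (intro exI conjI)
  show "Smor (Kcar V0) (t0 Kalpha) X t (\<lambda>d x. x)"
    by (simp add: Smor_def addhom_id t0_Kalpha)
qed (simp_all add: Ksub_Kcar bij_betw_def)

end

theorem corollary8p2:
  fixes p :: nat
  assumes "prime p"
  shows
  "\<comment> \<open>the functor M \<mapsto> (M_0, t_0) lands in graded cohomologically trivial S-modules\<close>
   (\<forall>(C::'a::ab_group_add kcar) \<alpha>. Ksub p C \<alpha> \<longrightarrow>
       Smod p (C V0) (t0 \<alpha>) \<and> coh_trivial p (C V0) (t0 \<alpha>)) \<and>
   \<comment> \<open>and on morphisms f \<mapsto> f_0\<close>
   (\<forall>(C::'a kcar) \<alpha> (D::'b::ab_group_add kcar) \<beta> f.
       Ksub p C \<alpha> \<and> Ksub p D \<beta> \<and> Kmor C \<alpha> D \<beta> f \<longrightarrow>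
       Smor (C V0) (t0 \<alpha>) (D V0) (t0 \<beta>) (f V0)) \<and>
   \<comment> \<open>full\<close>
   (\<forall>(C::'a kcar) \<alpha> (D::'b kcar) \<beta> g.
       Ksub p C \<alpha> \<and> Ksub p D \<beta> \<and> Smor (C V0) (t0 \<alpha>) (D V0) (t0 \<beta>) g \<longrightarrow>
       (\<exists>f. Kmor C \<alpha> D \<beta> f \<and> (\<forall>d. \<forall>x\<in>C V0 d. f V0 d x = g d x))) \<and>
   \<comment> \<open>faithful\<close>
   (\<forall>(C::'a kcar) \<alpha> (D::'b kcar) \<beta> f f'.
       Ksub p C \<alpha> \<and> Ksub p D \<beta> \<and> Kmor C \<alpha> D \<beta> f \<and> Kmor C \<alpha> D \<beta> f' \<and>
       (\<forall>d. \<forall>x\<in>C V0 d. f V0 d x = f' V0 d x) \<longrightarrow>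
       (\<forall>k d. \<forall>x\<in>C k d. f k d x = f' k d x)) \<and>
   \<comment> \<open>essentially surjective\<close>
   (\<forall>(X::bool \<Rightarrow> 'a set) t. Smod p X t \<and> coh_trivial p X t \<longrightarrow>
       (\<exists>(C::'a kcar) \<alpha> g. Ksub p C \<alpha> \<and> Smor (C V0) (t0 \<alpha>) X t g \<and>
          (\<forall>d. bij_betw (g d) (C V0 d) (X d)))) \<and>
   \<comment> \<open>injectivity / surjectivity is detected on the 0-component\<close>
   (\<forall>(C::'a kcar) \<alpha> (D::'b kcar) \<beta> f.
       Ksub p C \<alpha> \<and> Ksub p D \<beta> \<and> Kmor C \<alpha> D \<beta> f \<longrightarrow>
       ((\<forall>k d. inj_on (f k d) (C k d)) \<longleftrightarrow> (\<forall>d. inj_on (f V0 d) (C V0 d))) \<and>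
       ((\<forall>k d. f k d ` C k d = D k d) \<longleftrightarrow> (\<forall>d. f V0 d ` C V0 d = D V0 d)))"
proof (intro conjI allI impI ballI; (elim conjE)?)
  fix C :: "'a kcar" and \<alpha>
  assume "Ksub p C \<alpha>"
  then interpret Ksub_module p C \<alpha>
    by (rule Ksub_module.intro)
  show "Smod p (C V0) (t0 \<alpha>)"
    by (rule Smod_t0)
  show "coh_trivial p (C V0) (t0 \<alpha>)"
    by (rule coh_trivial_t0)
next
  fix C :: "'a kcar" and \<alpha> and D :: "'b kcar" and \<beta>
  assume "Ksub p C \<alpha>" "Ksub p D \<beta>"
  then interpret Ksub_pair p C \<alpha> D \<beta>
    by (simp add: Ksub_pair_def Ksub_module_def)
  show "Smor (C V0) (t0 \<alpha>) (D V0) (t0 \<beta>) (f V0)" if "Kmor C \<alpha> D \<beta> f" for f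
    using that by (rule Smor_Kmor)
  show "\<exists>f. Kmor C \<alpha> D \<beta> f \<and> (\<forall>d. \<forall>x\<in>C V0 d. f V0 d x = g d x)"
    if "Smor (C V0) (t0 \<alpha>) (D V0) (t0 \<beta>) g" for g
    using that by (rule Smor_extends_to_Kmor)
  show "f k d x = f' k d x"
    if "x \<in> C k d" "Kmor C \<alpha> D \<beta> f" "Kmor C \<alpha> D \<beta> f'" "\<forall>d. \<forall>x\<in>C V0 d. f V0 d x = f' V0 d x"
    for f f' k d x
    using Kmor_eqI that by blast
  show "(\<forall>k d. inj_on (f k d) (C k d)) \<longleftrightarrow> (\<forall>d. inj_on (f V0 d) (C V0 d))"
    and "(\<forall>k d. f k d ` C k d = D k d) \<longleftrightarrow> (\<forall>d. f V0 d ` C V0 d = D V0 d)"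
    if "Kmor C \<alpha> D \<beta> f" for f
    using that by (rule Kmor_inj_on_iff Kmor_surj_iff)+
next
  fix X :: "bool \<Rightarrow> 'a set" and t
  assume "Smod p X t" "coh_trivial p X t"
  then show "\<exists>(C :: 'a kcar) \<alpha> g. Ksub p C \<alpha> \<and> Smor (C V0) (t0 \<alpha>) X t g \<and> (\<forall>d. bij_betw (g d) (C V0 d) (X d))"
    by (intro coh_trivial_Smod.ex_Ksub_realising coh_trivial_Smod.intro)
qed

end
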